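(* Let $A$ be a ring. The Krull valuation spectrum $\mathrm{Spev}(A)$ embeds in $\mathrm{Speh}^m(A)$, and as a subset of $\mathrm{Speh}^m(A)$ it is $$\mathrm{Spev}(A)=\{x\in\mathrm{Speh}^m(A):|2(x)|\le1\}=\{x\in\mathrm{Speh}^m(A):|n(x)|\le1\text{ for all }n\in\mathbb{N}\}.$$
   Context: A halo is a commutative unital semiring with a partial order compatible with $+$ and $\cdot$; an aura is a halo whose semiring is a semifield; positive means $0<1$. A generalized seminorm on a ring $A$ is a map $|\cdot|:A\to R$ into a positive totally ordered aura with $|0|=0,|1|=1$, $|a+b|\le|a|+|b|$, $|ab|\le|a||b|$; multiplicative if $|ab|=|a||b|$; tempered if $R$ has tempered growth (for every non-zero $P\in\mathbb{N}[X]$ and $x\in R$, $x^n\le P(n)$ for all $n$ implies $x\le1$). Two seminorms $|\cdot|_1,|\cdot|_2$ on $A$ are multiplicatively equivalent if for all $a,b,c$: $|a|_1|c|_1\le|b|_1\iff|a|_2|c|_2\le|b|_2$; they are equivalent if $|a|_1\le|b|_1\iff|a|_2\le|b|_2$. A place is a multiplicative equivalence class of seminorms; $\mathrm{Speh}^m(A)$ is the set of tempered multiplicative places, and for $x$ a place, $|a(x)|$ denotes $|a|$ for a chosen representative. For a totally ordered group $\Gamma$, $R_\Gamma=\{0\}\cup\Gamma$ with $0$ smallest and absorbing and $a+b=\max(a,b)$. $\mathrm{Spev}(A)$ is the set of equivalence classes of Krull valuations, i.e. multiplicative seminorms $A\to R_\Gamma$. *)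

theory Defs
  imports Main "HOL-Computational_Algebra.Polynomial"
begin

record 'r halo =
  hcarrier :: "'r set"
  hzero :: 'r
  hone :: 'r
  hadd :: "'r \<Rightarrow> 'r \<Rightarrow> 'r"
  hmul :: "'r \<Rightarrow> 'r \<Rightarrow> 'r"
  hle :: "'r \<Rightarrow> 'r \<Rightarrow> bool"

definition comm_semiring_on :: "'r halo \<Rightarrow> bool" where
  "comm_semiring_on R \<longleftrightarrow>
     hzero R \<in> hcarrier R \<and> hone R \<in> hcarrier R \<and>
     (\<forall>x\<in>hcarrier R. \<forall>y\<in>hcarrier R. hadd R x y \<in> hcarrier R \<and> hmul R x y \<in> hcarrier R) \<and>
     (\<forall>x\<in>hcarrier R. \<forall>y\<in>hcarrier R. \<forall>z\<in>hcarrier R.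
        hadd R (hadd R x y) z = hadd R x (hadd R y z) \<and>
        hmul R (hmul R x y) z = hmul R x (hmul R y z) \<and>
        hmul R x (hadd R y z) = hadd R (hmul R x y) (hmul R x z)) \<and>
     (\<forall>x\<in>hcarrier R. \<forall>y\<in>hcarrier R. hadd R x y = hadd R y x \<and> hmul R x y = hmul R y x) \<and>
     (\<forall>x\<in>hcarrier R. hadd R (hzero R) x = x \<and> hmul R (hone R) x = x \<and> hmul R (hzero R) x = hzero R)"

definition partial_order_on_halo :: "'r halo \<Rightarrow> bool" where
  "partial_order_on_halo R \<longleftrightarrow>
     (\<forall>x\<in>hcarrier R. hle R x x) \<and>
     (\<forall>x\<in>hcarrier R. \<forall>y\<in>hcarrier R. hle R x y \<and> hle R y x \<longrightarrow> x = y) \<and>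
     (\<forall>x\<in>hcarrier R. \<forall>y\<in>hcarrier R. \<forall>z\<in>hcarrier R. hle R x y \<and> hle R y z \<longrightarrow> hle R x z)"

definition order_compatible :: "'r halo \<Rightarrow> bool" where
  "order_compatible R \<longleftrightarrow>
     (\<forall>x\<in>hcarrier R. \<forall>y\<in>hcarrier R. \<forall>z\<in>hcarrier R. hle R x y \<longrightarrow>
        hle R (hadd R x z) (hadd R y z) \<and> hle R (hmul R x z) (hmul R y z))"

definition is_halo :: "'r halo \<Rightarrow> bool" where
  "is_halo R \<longleftrightarrow> comm_semiring_on R \<and> partial_order_on_halo R \<and> order_compatible R"

definition is_semifield :: "'r halo \<Rightarrow> bool" where
  "is_semifield R \<longleftrightarrow> hzero R \<noteq> hone R \<and>
     (\<forall>x\<in>hcarrier R. x \<noteq> hzero R \<longrightarrow> (\<exists>y\<in>hcarrier R. hmul R x y = hone R))"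

definition is_aura :: "'r halo \<Rightarrow> bool" where
  "is_aura R \<longleftrightarrow> is_halo R \<and> is_semifield R"

definition halo_positive :: "'r halo \<Rightarrow> bool" where
  "halo_positive R \<longleftrightarrow> hle R (hzero R) (hone R) \<and> hzero R \<noteq> hone R"

definition halo_total :: "'r halo \<Rightarrow> bool" where
  "halo_total R \<longleftrightarrow> (\<forall>x\<in>hcarrier R. \<forall>y\<in>hcarrier R. hle R x y \<or> hle R y x)"

primrec hnat :: "'r halo \<Rightarrow> nat \<Rightarrow> 'r" where
  "hnat R 0 = hzero R"
| "hnat R (Suc n) = hadd R (hnat R n) (hone R)"

primrec hpow :: "'r halo \<Rightarrow> 'r \<Rightarrow> nat \<Rightarrow> 'r" where
  "hpow R x 0 = hone R"
| "hpow R x (Suc n) = hmul R (hpow R x n) x"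

definition hpoly_eval :: "'r halo \<Rightarrow> nat poly \<Rightarrow> nat \<Rightarrow> 'r" where
  "hpoly_eval R P n =
     foldr (\<lambda>i acc. hadd R (hmul R (hnat R (coeff P i)) (hpow R (hnat R n) i)) acc)
           [0..<Suc (degree P)] (hzero R)"

definition tempered_growth :: "'r halo \<Rightarrow> bool" where
  "tempered_growth R \<longleftrightarrow>
     (\<forall>P :: nat poly. P \<noteq> 0 \<longrightarrow> (\<forall>x\<in>hcarrier R.
        (\<forall>n. hle R (hpow R x n) (hpoly_eval R P n)) \<longrightarrow> hle R x (hone R)))"

definition gen_seminorm :: "'r halo \<Rightarrow> ('a::comm_ring_1 \<Rightarrow> 'r) \<Rightarrow> bool" where
  "gen_seminorm R f \<longleftrightarrow>
     halo_positive R \<and> halo_total R \<and> is_aura R \<and>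
     (\<forall>a. f a \<in> hcarrier R) \<and> f 0 = hzero R \<and> f 1 = hone R \<and>
     (\<forall>a b. hle R (f (a + b)) (hadd R (f a) (f b))) \<and>
     (\<forall>a b. hle R (f (a * b)) (hmul R (f a) (f b)))"

definition mult_seminorm :: "'r halo \<Rightarrow> ('a::comm_ring_1 \<Rightarrow> 'r) \<Rightarrow> bool" where
  "mult_seminorm R f \<longleftrightarrow> gen_seminorm R f \<and> (\<forall>a b. f (a * b) = hmul R (f a) (f b))"

definition tempered_mult_seminorm :: "'r halo \<Rightarrow> ('a::comm_ring_1 \<Rightarrow> 'r) \<Rightarrow> bool" where
  "tempered_mult_seminorm R f \<longleftrightarrow> mult_seminorm R f \<and> tempered_growth R"

definition mult_equiv ::
  "'r halo \<Rightarrow> ('a::comm_ring_1 \<Rightarrow> 'r) \<Rightarrow> 's halo \<Rightarrow> ('a \<Rightarrow> 's) \<Rightarrow> bool" where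
  "mult_equiv R1 f1 R2 f2 \<longleftrightarrow>
     (\<forall>a b c. hle R1 (hmul R1 (f1 a) (f1 c)) (f1 b) \<longleftrightarrow> hle R2 (hmul R2 (f2 a) (f2 c)) (f2 b))"

definition seminorm_equiv ::
  "'r halo \<Rightarrow> ('a::comm_ring_1 \<Rightarrow> 'r) \<Rightarrow> 's halo \<Rightarrow> ('a \<Rightarrow> 's) \<Rightarrow> bool" where
  "seminorm_equiv R1 f1 R2 f2 \<longleftrightarrow> (\<forall>a b. hle R1 (f1 a) (f1 b) \<longleftrightarrow> hle R2 (f2 a) (f2 b))"

record 'g ogroup =
  gcarrier :: "'g set"
  gmul :: "'g \<Rightarrow> 'g \<Rightarrow> 'g"
  gone :: 'g
  gle :: "'g \<Rightarrow> 'g \<Rightarrow> bool"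

definition tot_ord_abgroup :: "'g ogroup \<Rightarrow> bool" where
  "tot_ord_abgroup G \<longleftrightarrow>
     gone G \<in> gcarrier G \<and>
     (\<forall>x\<in>gcarrier G. \<forall>y\<in>gcarrier G. gmul G x y \<in> gcarrier G \<and> gmul G x y = gmul G y x) \<and>
     (\<forall>x\<in>gcarrier G. \<forall>y\<in>gcarrier G. \<forall>z\<in>gcarrier G. gmul G (gmul G x y) z = gmul G x (gmul G y z)) \<and>
     (\<forall>x\<in>gcarrier G. gmul G (gone G) x = x \<and> (\<exists>y\<in>gcarrier G. gmul G x y = gone G)) \<and>
     (\<forall>x\<in>gcarrier G. gle G x x) \<and>
     (\<forall>x\<in>gcarrier G. \<forall>y\<in>gcarrier G. gle G x y \<and> gle G y x \<longrightarrow> x = y) \<and>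
     (\<forall>x\<in>gcarrier G. \<forall>y\<in>gcarrier G. \<forall>z\<in>gcarrier G. gle G x y \<and> gle G y z \<longrightarrow> gle G x z) \<and>
     (\<forall>x\<in>gcarrier G. \<forall>y\<in>gcarrier G. gle G x y \<or> gle G y x) \<and>
     (\<forall>x\<in>gcarrier G. \<forall>y\<in>gcarrier G. \<forall>z\<in>gcarrier G. gle G x y \<longrightarrow> gle G (gmul G x z) (gmul G y z))"

text \<open>\<open>R_\<Gamma> = {0} \<union> \<Gamma>\<close>, with \<open>0\<close> represented by \<open>None\<close>, addition = max.\<close>
definition RGamma :: "'g ogroup \<Rightarrow> 'g option halo" where
  "RGamma G =
    \<lparr> hcarrier = insert None (Some ` gcarrier G),
      hzero = None,
      hone = Some (gone G),
      hadd = (\<lambda>x y. case x of None \<Rightarrow> y | Some a \<Rightarrow>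
                 (case y of None \<Rightarrow> x | Some b \<Rightarrow> Some (if gle G a b then b else a))),
      hmul = (\<lambda>x y. case x of None \<Rightarrow> None | Some a \<Rightarrow>
                 (case y of None \<Rightarrow> None | Some b \<Rightarrow> Some (gmul G a b))),
      hle = (\<lambda>x y. case x of None \<Rightarrow> True | Some a \<Rightarrow>
                 (case y of None \<Rightarrow> False | Some b \<Rightarrow> gle G a b)) \<rparr>"

definition krull_valuation :: "'g ogroup \<Rightarrow> ('a::comm_ring_1 \<Rightarrow> 'g option) \<Rightarrow> bool" where
  "krull_valuation G v \<longleftrightarrow> tot_ord_abgroup G \<and> mult_seminorm (RGamma G) v"

end

theory Submission imports Defs begin

text \<open>
  A Krull valuation takes values in \<open>R\<^sub>\<Gamma>\<close>, where every positive integer equals \<open>1\<close>;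
  hence \<open>R\<^sub>\<Gamma>\<close> has tempered growth and \<open>|2| = max(1,1) = 1\<close>. For multiplicative seminorms,
  equivalence and multiplicative equivalence agree (take \<open>c = 1\<close>, resp. replace \<open>a\<close> by \<open>ac\<close>),
  and \<open>|2| \<le> 1\<close> is invariant under multiplicative equivalence.

  Conversely, let \<open>|\<cdot>|\<close> be tempered and multiplicative with \<open>|2| \<le> 1\<close>. Binary expansion gives
  \<open>|m| \<le> j\<close> for \<open>m < 2\<^sup>j\<close>, so \<open>|n|\<^sup>k = |n\<^sup>k| \<le> nk + 1\<close> and tempered growth forces \<open>|n| \<le> 1\<close>.
  The binomial formula then yields \<open>|a + b|\<^sup>n \<le> (n + 1) max(|a|,|b|)\<^sup>n\<close>, and tempered growth
  again gives the ultrametric inequality. Thus \<open>|\<cdot>|\<close> itself is a Krull valuation with value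
  group the nonzero elements of its target.
\<close>

locale ordered_aura =
  fixes R :: "'r halo"
  assumes halo: "is_halo R" and positive: "halo_positive R" and total: "halo_total R"
    and semifield: "is_semifield R"
begin

abbreviation "Cr \<equiv> hcarrier R"
abbreviation "zr \<equiv> hzero R"
abbreviation "er \<equiv> hone R"
abbreviation hadd_infix (infixl "\<oplus>" 65) where "x \<oplus> y \<equiv> hadd R x y"
abbreviation hmul_infix (infixl "\<otimes>" 70) where "x \<otimes> y \<equiv> hmul R x y"
abbreviation hle_infix (infix "\<preceq>" 50) where "x \<preceq> y \<equiv> hle R x y"

lemma zero_closed [simp]: "zr \<in> Cr"
  and one_closed [simp]: "er \<in> Cr"
  and add_closed [simp]: "x \<in> Cr \<Longrightarrow> y \<in> Cr \<Longrightarrow> x \<oplus> y \<in> Cr"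
  and mul_closed [simp]: "x \<in> Cr \<Longrightarrow> y \<in> Cr \<Longrightarrow> x \<otimes> y \<in> Cr"
  and add_assoc: "x \<in> Cr \<Longrightarrow> y \<in> Cr \<Longrightarrow> w \<in> Cr \<Longrightarrow> (x \<oplus> y) \<oplus> w = x \<oplus> (y \<oplus> w)"
  and mul_assoc: "x \<in> Cr \<Longrightarrow> y \<in> Cr \<Longrightarrow> w \<in> Cr \<Longrightarrow> (x \<otimes> y) \<otimes> w = x \<otimes> (y \<otimes> w)"
  and distrib_left: "x \<in> Cr \<Longrightarrow> y \<in> Cr \<Longrightarrow> w \<in> Cr \<Longrightarrow> x \<otimes> (y \<oplus> w) = x \<otimes> y \<oplus> x \<otimes> w"
  and add_comm: "x \<in> Cr \<Longrightarrow> y \<in> Cr \<Longrightarrow> x \<oplus> y = y \<oplus> x"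
  and mul_comm: "x \<in> Cr \<Longrightarrow> y \<in> Cr \<Longrightarrow> x \<otimes> y = y \<otimes> x"
  and add_zero_left [simp]: "x \<in> Cr \<Longrightarrow> zr \<oplus> x = x"
  and mul_one_left [simp]: "x \<in> Cr \<Longrightarrow> er \<otimes> x = x"
  and mul_zero_left [simp]: "x \<in> Cr \<Longrightarrow> zr \<otimes> x = zr"
  using halo by (auto simp: is_halo_def comm_semiring_on_def)

lemma add_zero_right [simp]: "x \<in> Cr \<Longrightarrow> x \<oplus> zr = x"
  and mul_one_right [simp]: "x \<in> Cr \<Longrightarrow> x \<otimes> er = x"
  and mul_zero_right [simp]: "x \<in> Cr \<Longrightarrow> x \<otimes> zr = zr"
  by (simp_all add: add_comm[of x] mul_comm[of x])

lemma distrib_right: "x \<in> Cr \<Longrightarrow> y \<in> Cr \<Longrightarrow> w \<in> Cr \<Longrightarrow> (x \<oplus> y) \<otimes> w = x \<otimes> w \<oplus> y \<otimes> w"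
  by (simp add: distrib_left mul_comm)

lemma mul_left_commute: "x \<in> Cr \<Longrightarrow> y \<in> Cr \<Longrightarrow> w \<in> Cr \<Longrightarrow> x \<otimes> (y \<otimes> w) = y \<otimes> (x \<otimes> w)"
  by (simp add: mul_assoc[symmetric] mul_comm[of x y])

lemma le_refl [simp]: "x \<in> Cr \<Longrightarrow> x \<preceq> x"
  and le_antisym: "x \<in> Cr \<Longrightarrow> y \<in> Cr \<Longrightarrow> x \<preceq> y \<Longrightarrow> y \<preceq> x \<Longrightarrow> x = y"
  and le_trans: "x \<preceq> y \<Longrightarrow> y \<preceq> w \<Longrightarrow> x \<in> Cr \<Longrightarrow> y \<in> Cr \<Longrightarrow> w \<in> Cr \<Longrightarrow> x \<preceq> w"
  and add_right_mono: "x \<preceq> y \<Longrightarrow> x \<in> Cr \<Longrightarrow> y \<in> Cr \<Longrightarrow> w \<in> Cr \<Longrightarrow> x \<oplus> w \<preceq> y \<oplus> w"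
  and mul_right_mono: "x \<preceq> y \<Longrightarrow> x \<in> Cr \<Longrightarrow> y \<in> Cr \<Longrightarrow> w \<in> Cr \<Longrightarrow> x \<otimes> w \<preceq> y \<otimes> w"
  using halo unfolding is_halo_def partial_order_on_halo_def order_compatible_def by blast+

lemma le_total: "x \<in> Cr \<Longrightarrow> y \<in> Cr \<Longrightarrow> x \<preceq> y \<or> y \<preceq> x"
  using total unfolding halo_total_def by blast

lemma add_mono:
  "x \<preceq> y \<Longrightarrow> u \<preceq> w \<Longrightarrow> x \<in> Cr \<Longrightarrow> y \<in> Cr \<Longrightarrow> u \<in> Cr \<Longrightarrow> w \<in> Cr \<Longrightarrow> x \<oplus> u \<preceq> y \<oplus> w"
  using add_right_mono[of x y u] add_right_mono[of u w y] le_trans[of "x \<oplus> u" "y \<oplus> u" "y \<oplus> w"]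
  by (simp add: add_comm[of y])

lemma mul_mono:
  "x \<preceq> y \<Longrightarrow> u \<preceq> w \<Longrightarrow> x \<in> Cr \<Longrightarrow> y \<in> Cr \<Longrightarrow> u \<in> Cr \<Longrightarrow> w \<in> Cr \<Longrightarrow> x \<otimes> u \<preceq> y \<otimes> w"
  using mul_right_mono[of x y u] mul_right_mono[of u w y] le_trans[of "x \<otimes> u" "y \<otimes> u" "y \<otimes> w"]
  by (simp add: mul_comm[of y])

lemma zero_le_one [simp]: "zr \<preceq> er"
  and zero_neq_one [simp]: "zr \<noteq> er"
  and one_neq_zero [simp]: "er \<noteq> zr"
  using positive by (auto simp: halo_positive_def)

lemma zero_le [simp]: "x \<in> Cr \<Longrightarrow> zr \<preceq> x"
  using mul_right_mono[OF zero_le_one, of x] by simp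

lemma le_zero_iff: "x \<in> Cr \<Longrightarrow> x \<preceq> zr \<longleftrightarrow> x = zr"
  using le_antisym zero_le by fastforce

lemma inverse_exists: "x \<in> Cr \<Longrightarrow> x \<noteq> zr \<Longrightarrow> \<exists>y\<in>Cr. x \<otimes> y = er"
  using semifield by (auto simp: is_semifield_def)

lemma nonzero_inverse_exists:
  assumes "x \<in> Cr" "x \<noteq> zr"
  shows "\<exists>y\<in>Cr - {zr}. x \<otimes> y = er"
proof -
  obtain y where "y \<in> Cr" "x \<otimes> y = er"
    using inverse_exists assms by blast
  moreover have "y \<noteq> zr"
    using calculation assms by auto
  ultimately show ?thesis
    by blast
qed

lemma mul_neq_zero:
  assumes "x \<in> Cr" "y \<in> Cr" "x \<noteq> zr" "y \<noteq> zr"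
  shows "x \<otimes> y \<noteq> zr"
proof
  assume "x \<otimes> y = zr"
  obtain x' where "x' \<in> Cr" "x' \<otimes> x = er"
    using inverse_exists assms mul_comm by metis
  then have "y = x' \<otimes> (x \<otimes> y)"
    using assms by (simp flip: mul_assoc)
  with \<open>x \<otimes> y = zr\<close> \<open>x' \<in> Cr\<close> assms show False
    by simp
qed

lemma hpow_closed [simp]: "x \<in> Cr \<Longrightarrow> hpow R x n \<in> Cr"
  by (induct n) auto

lemma hpow_mult_distrib:
  "x \<in> Cr \<Longrightarrow> y \<in> Cr \<Longrightarrow> hpow R (x \<otimes> y) n = hpow R x n \<otimes> hpow R y n"
  by (induct n) (auto simp: mul_assoc mul_left_commute)

lemma hpow_add: "x \<in> Cr \<Longrightarrow> hpow R x (m + n) = hpow R x m \<otimes> hpow R x n"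
  by (induct n) (auto simp: mul_assoc)

lemma hpow_one [simp]: "hpow R er n = er"
  by (induct n) auto

lemma hpow_mono: "x \<preceq> y \<Longrightarrow> x \<in> Cr \<Longrightarrow> y \<in> Cr \<Longrightarrow> hpow R x n \<preceq> hpow R y n"
  by (induct n) (auto intro: mul_mono)

lemma hnat_closed [simp]: "hnat R n \<in> Cr"
  by (induct n) auto

lemma hnat_add: "hnat R (m + n) = hnat R m \<oplus> hnat R n"
  by (induct n) (auto simp: add_assoc)

lemma hnat_mult: "hnat R (m * n) = hnat R m \<otimes> hnat R n"
  by (induct n) (auto simp: hnat_add distrib_left add_comm)

lemma hnat_power: "hnat R (m ^ i) = hpow R (hnat R m) i"
  by (induct i) (auto simp: hnat_mult mul_comm)

lemma hpoly_eval_eq_hnat_poly: "hpoly_eval R P n = hnat R (poly P n)"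
proof -
  have "foldr (\<lambda>i acc. hnat R (coeff P i) \<otimes> hpow R (hnat R n) i \<oplus> acc) xs zr
      = hnat R (\<Sum>i\<leftarrow>xs. coeff P i * n ^ i)" for xs
    by (induct xs) (auto simp: hnat_add hnat_mult hnat_power)
  moreover have "(\<Sum>i\<leftarrow>[0..<Suc (degree P)]. coeff P i * n ^ i) = poly P n"
    unfolding interv_sum_list_conv_sum_set_nat set_upt atLeast0LessThan lessThan_Suc_atMost poly_altdef ..
  ultimately show ?thesis
    unfolding hpoly_eval_def by simp
qed

lemma tempered_growthD:
  "tempered_growth R \<Longrightarrow> Q \<noteq> 0 \<Longrightarrow> x \<in> Cr \<Longrightarrow> (\<And>n. hpow R x n \<preceq> hnat R (poly Q n)) \<Longrightarrow> x \<preceq> er"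
  unfolding tempered_growth_def by (simp add: hpoly_eval_eq_hnat_poly)

lemma le_of_power_le_linear_mult_power:
  assumes "tempered_growth R" and x: "x \<in> Cr" and m: "m \<in> Cr"
    and bound: "\<And>n. hpow R x n \<preceq> hnat R (Suc n) \<otimes> hpow R m n"
  shows "x \<preceq> m"
proof (cases "m = zr")
  case True
  then show ?thesis
    using bound[of 1] x by simp
next
  case False
  then obtain m' where m': "m' \<in> Cr" "m \<otimes> m' = er"
    using inverse_exists m by blast
  have "x \<otimes> m' \<preceq> er"
  proof (rule tempered_growthD[OF \<open>tempered_growth R\<close>, of "[:1, 1:]"])
    fix n
    have "hpow R (x \<otimes> m') n = hpow R x n \<otimes> hpow R m' n"
      using x m' by (simp add: hpow_mult_distrib)
    also have "\<dots> \<preceq> (hnat R (Suc n) \<otimes> hpow R m n) \<otimes> hpow R m' n"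
      using bound[of n] x m m' by (intro mul_right_mono) auto
    also have "\<dots> = hnat R (Suc n) \<otimes> hpow R (m \<otimes> m') n"
      using m m' by (simp add: mul_assoc flip: hpow_mult_distrib)
    also have "\<dots> = hnat R (poly [:1, 1:] n)"
      using m' by simp
    finally show "hpow R (x \<otimes> m') n \<preceq> hnat R (poly [:1, 1:] n)" .
  qed (use x m' in auto)
  then have "(x \<otimes> m') \<otimes> m \<preceq> er \<otimes> m"
    using x m m' by (intro mul_right_mono) auto
  then show ?thesis
    using x m m' by (simp add: mul_assoc mul_comm[of m' m])
qed

end

locale tempered_seminorm = ordered_aura R for R :: "'r halo" +
  fixes f :: "'a::comm_ring_1 \<Rightarrow> 'r"
  assumes closed [simp]: "f a \<in> hcarrier R"
    and map_zero [simp]: "f 0 = hzero R" and map_one [simp]: "f 1 = hone R"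
    and triangle: "hle R (f (a + b)) (hadd R (f a) (f b))"
    and map_mult: "f (a * b) = hmul R (f a) (f b)"
    and tempered: "tempered_growth R"

lemma tempered_seminormI: "tempered_mult_seminorm R f \<Longrightarrow> tempered_seminorm R f"
  unfolding tempered_mult_seminorm_def mult_seminorm_def gen_seminorm_def is_aura_def
  by (intro tempered_seminorm.intro ordered_aura.intro tempered_seminorm_axioms.intro) auto

context tempered_seminorm
begin

lemma map_power: "f (a ^ n) = hpow R (f a) n"
  by (induct n) (simp_all add: map_mult power_Suc2 del: power_Suc)

lemma map_sum_le_hnat_mult:
  assumes "m \<in> Cr" and "\<And>k. k < n \<Longrightarrow> f (g k) \<preceq> m"
  shows "f (\<Sum>k<n. g k) \<preceq> hnat R n \<otimes> m"
  using assms(2)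
proof (induct n)
  case (Suc n)
  have split: "f (\<Sum>k<Suc n. g k) \<preceq> f (\<Sum>k<n. g k) \<oplus> f (g n)"
    using triangle by simp
  have bound: "f (\<Sum>k<n. g k) \<oplus> f (g n) \<preceq> hnat R n \<otimes> m \<oplus> m"
    using Suc \<open>m \<in> Cr\<close> by (intro add_mono) auto
  show ?case
    using le_trans[OF split bound] \<open>m \<in> Cr\<close> by (simp add: distrib_right)
qed (simp add: \<open>m \<in> Cr\<close>)

lemma map_of_nat_le_hnat:
  assumes two: "f 2 \<preceq> er"
  shows "m < 2 ^ j \<Longrightarrow> f (of_nat m) \<preceq> hnat R j"
proof (induct j arbitrary: m)
  case (Suc j)
  have "(of_nat m :: 'a) = of_nat (2 * (m div 2) + m mod 2)"
    by simp
  also have "\<dots> = 2 * of_nat (m div 2) + of_nat (m mod 2)"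
    by (simp only: of_nat_add of_nat_mult of_nat_numeral)
  finally have "f (of_nat m) \<preceq> f (2 * of_nat (m div 2)) \<oplus> f (of_nat (m mod 2))"
    using triangle by simp
  then have expand: "f (of_nat m) \<preceq> f 2 \<otimes> f (of_nat (m div 2)) \<oplus> f (of_nat (m mod 2))"
    by (simp only: map_mult)
  have bound: "f 2 \<otimes> f (of_nat (m div 2)) \<oplus> f (of_nat (m mod 2)) \<preceq> er \<otimes> hnat R j \<oplus> er"
  proof (intro add_mono mul_mono two Suc.hyps)
    show "m div 2 < 2 ^ j"
      using Suc.prems by auto
    show "f (of_nat (m mod 2)) \<preceq> er"
      by (cases "m mod 2 = 0") (auto simp: not_mod_2_eq_1_eq_0)
  qed auto
  show ?case
    using le_trans[OF expand bound] by simp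
qed simp

lemma map_of_nat_le_one:
  assumes two: "f 2 \<preceq> er"
  shows "f (of_nat n) \<preceq> er"
proof (rule tempered_growthD[OF tempered, of "[:1, n:]"])
  fix k
  have "n ^ k \<le> (2 ^ n) ^ k"
    by (rule power_mono) (auto intro: less_imp_le less_exp)
  also have "\<dots> = 2 ^ (n * k)"
    by (simp add: power_mult)
  also have "\<dots> < 2 ^ (n * k + 1)"
    by simp
  finally have "n ^ k < 2 ^ (n * k + 1)" .
  then have "f (of_nat (n ^ k)) \<preceq> hnat R (n * k + 1)"
    by (rule map_of_nat_le_hnat[OF two])
  then show "hpow R (f (of_nat n)) k \<preceq> hnat R (poly [:1, n:] k)"
    by (simp add: map_power mult.commute)
qed auto

lemma map_add_le:
  assumes two: "f 2 \<preceq> er" and m: "m \<in> Cr" and "f a \<preceq> m" and "f b \<preceq> m"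
  shows "f (a + b) \<preceq> m"
proof (rule le_of_power_le_linear_mult_power[OF tempered closed m])
  fix n
  have term_le: "f (of_nat (n choose k) * a ^ k * b ^ (n - k)) \<preceq> hpow R m n" if "k < Suc n" for k
  proof -
    have "f (of_nat (n choose k) * a ^ k * b ^ (n - k))
        = f (of_nat (n choose k)) \<otimes> hpow R (f a) k \<otimes> hpow R (f b) (n - k)"
      by (simp add: map_mult map_power)
    also have "\<dots> \<preceq> er \<otimes> hpow R m k \<otimes> hpow R m (n - k)"
      using assms by (intro mul_mono map_of_nat_le_one hpow_mono) auto
    also have "\<dots> = hpow R m n"
      using that m by (simp flip: hpow_add)
    finally show ?thesis .
  qed
  have "(a + b) ^ n = (\<Sum>k<Suc n. of_nat (n choose k) * a ^ k * b ^ (n - k))"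
    unfolding binomial_ring lessThan_Suc_atMost ..
  then have "hpow R (f (a + b)) n = f (\<Sum>k<Suc n. of_nat (n choose k) * a ^ k * b ^ (n - k))"
    by (simp flip: map_power)
  also have "\<dots> \<preceq> hnat R (Suc n) \<otimes> hpow R m n"
    using m term_le by (intro map_sum_le_hnat_mult) auto
  finally show "hpow R (f (a + b)) n \<preceq> hnat R (Suc n) \<otimes> hpow R m n" .
qed

lemma nonarchimedean: "f 2 \<preceq> er \<Longrightarrow> f (a + b) \<preceq> f a \<or> f (a + b) \<preceq> f b"
  using le_total[of "f a" "f b"] map_add_le[of "f a" a b] map_add_le[of "f b" a b] by auto

end

locale ordered_group =
  fixes G :: "'g ogroup"
  assumes ordered_abgroup: "tot_ord_abgroup G"
begin

abbreviation "Gc \<equiv> gcarrier G"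

lemma gone_closed [simp]: "gone G \<in> Gc"
  and gmul_closed [simp]: "x \<in> Gc \<Longrightarrow> y \<in> Gc \<Longrightarrow> gmul G x y \<in> Gc"
  and gmul_comm: "x \<in> Gc \<Longrightarrow> y \<in> Gc \<Longrightarrow> gmul G x y = gmul G y x"
  and gmul_assoc:
    "x \<in> Gc \<Longrightarrow> y \<in> Gc \<Longrightarrow> w \<in> Gc \<Longrightarrow> gmul G (gmul G x y) w = gmul G x (gmul G y w)"
  and gmul_one_left [simp]: "x \<in> Gc \<Longrightarrow> gmul G (gone G) x = x"
  and ginverse_exists: "x \<in> Gc \<Longrightarrow> \<exists>y\<in>Gc. gmul G x y = gone G"
  and gle_refl [simp]: "x \<in> Gc \<Longrightarrow> gle G x x"
  and gle_antisym: "x \<in> Gc \<Longrightarrow> y \<in> Gc \<Longrightarrow> gle G x y \<Longrightarrow> gle G y x \<Longrightarrow> x = y"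
  and gle_trans:
    "x \<in> Gc \<Longrightarrow> y \<in> Gc \<Longrightarrow> w \<in> Gc \<Longrightarrow> gle G x y \<Longrightarrow> gle G y w \<Longrightarrow> gle G x w"
  and gle_total: "x \<in> Gc \<Longrightarrow> y \<in> Gc \<Longrightarrow> gle G x y \<or> gle G y x"
  and gmul_right_mono:
    "x \<in> Gc \<Longrightarrow> y \<in> Gc \<Longrightarrow> w \<in> Gc \<Longrightarrow> gle G x y \<Longrightarrow> gle G (gmul G x w) (gmul G y w)"
  using ordered_abgroup unfolding tot_ord_abgroup_def by (elim conjE; meson)+

lemma gmul_left_mono:
  "x \<in> Gc \<Longrightarrow> y \<in> Gc \<Longrightarrow> w \<in> Gc \<Longrightarrow> gle G x y \<Longrightarrow> gle G (gmul G w x) (gmul G w y)"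
  using gmul_right_mono gmul_comm by metis

definition gmax :: "'g \<Rightarrow> 'g \<Rightarrow> 'g" where
  "gmax a b = (if gle G a b then b else a)"

lemma gmax_closed [simp]: "a \<in> Gc \<Longrightarrow> b \<in> Gc \<Longrightarrow> gmax a b \<in> Gc"
  by (simp add: gmax_def)

lemma gmax_comm: "a \<in> Gc \<Longrightarrow> b \<in> Gc \<Longrightarrow> gmax a b = gmax b a"
  unfolding gmax_def using gle_antisym gle_total by metis

lemma gmax_assoc: "a \<in> Gc \<Longrightarrow> b \<in> Gc \<Longrightarrow> c \<in> Gc \<Longrightarrow> gmax (gmax a b) c = gmax a (gmax b c)"
  unfolding gmax_def using gle_antisym gle_total gle_trans by (smt (verit))

lemma gmul_gmax_distrib:
  assumes "a \<in> Gc" "b \<in> Gc" "c \<in> Gc"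
  shows "gmul G a (gmax b c) = gmax (gmul G a b) (gmul G a c)"
proof (cases "gle G b c")
  case True
  then show ?thesis
    using gmul_left_mono assms by (simp add: gmax_def)
next
  case False
  then have "gle G (gmul G a c) (gmul G a b)"
    using gmul_left_mono gle_total assms by blast
  then show ?thesis
    using False assms gle_antisym[of "gmul G a b" "gmul G a c"] by (auto simp: gmax_def)
qed

lemma gmax_mono: "a \<in> Gc \<Longrightarrow> b \<in> Gc \<Longrightarrow> c \<in> Gc \<Longrightarrow> gle G a b \<Longrightarrow> gle G (gmax a c) (gmax b c)"
  unfolding gmax_def using gle_total gle_trans by (smt (verit) gle_refl)

lemma gmax_ge1: "a \<in> Gc \<Longrightarrow> b \<in> Gc \<Longrightarrow> gle G a (gmax a b)"
  and gmax_ge2: "a \<in> Gc \<Longrightarrow> b \<in> Gc \<Longrightarrow> gle G b (gmax a b)"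
  unfolding gmax_def using gle_total by auto

lemma RGamma_hadd:
  "hadd (RGamma G) x y =
     (case x of None \<Rightarrow> y | Some a \<Rightarrow> (case y of None \<Rightarrow> x | Some b \<Rightarrow> Some (gmax a b)))"
  unfolding gmax_def RGamma_def by simp

lemma RGamma_simps:
  "hcarrier (RGamma G) = insert None (Some ` Gc)"
  "hzero (RGamma G) = None"
  "hone (RGamma G) = Some (gone G)"
  "hmul (RGamma G) x y =
     (case x of None \<Rightarrow> None | Some a \<Rightarrow> (case y of None \<Rightarrow> None | Some b \<Rightarrow> Some (gmul G a b)))"
  "hle (RGamma G) x y =
     (case x of None \<Rightarrow> True | Some a \<Rightarrow> (case y of None \<Rightarrow> False | Some b \<Rightarrow> gle G a b))"
  by (simp_all add: RGamma_def)

lemma RGamma_is_halo: "is_halo (RGamma G)"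
  unfolding is_halo_def comm_semiring_on_def partial_order_on_halo_def order_compatible_def
    RGamma_hadd RGamma_simps
  by (auto simp: gmul_assoc gmax_assoc gmul_gmax_distrib gmul_right_mono gmax_mono
      dest: gle_antisym intro: gle_trans)
    (blast intro: gmax_comm gmul_comm gmax_ge2)+

lemma RGamma_is_semifield: "is_semifield (RGamma G)"
  unfolding is_semifield_def RGamma_simps by (auto dest: ginverse_exists)

lemma RGamma_positive: "halo_positive (RGamma G)"
  unfolding halo_positive_def RGamma_simps by simp

lemma RGamma_total: "halo_total (RGamma G)"
  unfolding halo_total_def RGamma_simps using gle_total by auto

lemma RGamma_ordered_aura: "ordered_aura (RGamma G)"
  by (simp add: ordered_aura_def RGamma_is_halo RGamma_is_semifield RGamma_positive RGamma_total)

lemma RGamma_le_hadd1: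
    "x \<in> hcarrier (RGamma G) \<Longrightarrow> y \<in> hcarrier (RGamma G) \<Longrightarrow> hle (RGamma G) x (hadd (RGamma G) x y)"
  and RGamma_le_hadd2:
    "x \<in> hcarrier (RGamma G) \<Longrightarrow> y \<in> hcarrier (RGamma G) \<Longrightarrow> hle (RGamma G) y (hadd (RGamma G) x y)"
  unfolding RGamma_hadd RGamma_simps by (auto simp: gmax_ge1 gmax_ge2)

lemma RGamma_hnat_Suc: "hnat (RGamma G) (Suc k) = Some (gone G)"
  by (induct k) (simp_all add: RGamma_hadd RGamma_simps gmax_def)

lemma RGamma_tempered_growth: "tempered_growth (RGamma G)"
  unfolding tempered_growth_def
proof (intro allI impI ballI)
  fix P :: "nat poly" and x
  assume "P \<noteq> 0" and x: "x \<in> hcarrier (RGamma G)"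
    and bound: "\<forall>n. hle (RGamma G) (hpow (RGamma G) x n) (hpoly_eval (RGamma G) P n)"
  from \<open>P \<noteq> 0\<close> have "poly P 1 \<noteq> 0"
    by (auto simp: poly_altdef intro!: bexI[of _ "degree P"] gr0I)
  then obtain k where k: "poly P 1 = Suc k"
    using not0_implies_Suc by blast
  have "hpow (RGamma G) x 1 = x"
    using ordered_aura.mul_one_left[OF RGamma_ordered_aura x] by simp
  then have "hle (RGamma G) x (hnat (RGamma G) (poly P 1))"
    using bound[rule_format, of 1]
    by (simp add: ordered_aura.hpoly_eval_eq_hnat_poly[OF RGamma_ordered_aura])
  then show "hle (RGamma G) x (hone (RGamma G))"
    by (simp only: k RGamma_hnat_Suc RGamma_simps(3))
qed

end

lemma krull_valuation_tempered:
  "krull_valuation G v \<Longrightarrow> tempered_mult_seminorm (RGamma G) v"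
  unfolding tempered_mult_seminorm_def krull_valuation_def
  using ordered_group.RGamma_tempered_growth ordered_group_def by blast

lemma seminorm_equiv_iff_mult_equiv:
  assumes "\<And>a b. f1 (a * b) = hmul R1 (f1 a) (f1 b)" and "\<And>a b. f2 (a * b) = hmul R2 (f2 a) (f2 b)"
  shows "seminorm_equiv R1 f1 R2 f2 \<longleftrightarrow> mult_equiv R1 f1 R2 f2"
  unfolding seminorm_equiv_def mult_equiv_def
  by (metis assms mult_1_right)

lemma mult_equiv_le_one_iff:
  assumes "mult_equiv R1 f1 R2 f2" and "gen_seminorm R1 f1" and "gen_seminorm R2 f2"
  shows "hle R1 (f1 a) (hone R1) \<longleftrightarrow> hle R2 (f2 a) (hone R2)"
proof -
  interpret R1: ordered_aura R1
    using assms(2) by (simp add: gen_seminorm_def ordered_aura_def is_aura_def)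
  interpret R2: ordered_aura R2
    using assms(3) by (simp add: gen_seminorm_def ordered_aura_def is_aura_def)
  show ?thesis
    using assms unfolding mult_equiv_def gen_seminorm_def by (metis R1.mul_one_right R2.mul_one_right)
qed

lemma krull_valuation_two_le_one:
  assumes "krull_valuation G v"
  shows "hle (RGamma G) (v 2) (hone (RGamma G))"
proof -
  interpret ordered_group G
    using assms by (simp add: krull_valuation_def ordered_group_def)
  have "gen_seminorm (RGamma G) v"
    using assms unfolding krull_valuation_def mult_seminorm_def by blast
  then have "hle (RGamma G) (v (1 + 1)) (hadd (RGamma G) (v 1) (v 1))" and "v 1 = hone (RGamma G)"
    unfolding gen_seminorm_def by blast+
  then show ?thesis
    by (simp add: RGamma_hadd RGamma_simps gmax_def one_add_one)
qed

context ordered_aura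
begin

definition nonzero_group :: "'r ogroup" where
  "nonzero_group = \<lparr>gcarrier = Cr - {zr}, gmul = hmul R, gone = er, gle = hle R\<rparr>"

lemma ordered_group_nonzero_group: "ordered_group nonzero_group"
  unfolding ordered_group_def tot_ord_abgroup_def nonzero_group_def ogroup.select_convs
  by (auto simp: mul_neq_zero mul_assoc le_total intro: mul_comm le_trans le_antisym mul_right_mono
      dest: nonzero_inverse_exists)

end

context tempered_seminorm
begin

definition valuation :: "'a \<Rightarrow> 'r option" where
  "valuation a = (if f a = zr then None else Some (f a))"

lemma valuation_mult: "valuation (a * b) = hmul (RGamma nonzero_group) (valuation a) (valuation b)"
  unfolding valuation_def RGamma_def nonzero_group_def by (auto simp: map_mult mul_neq_zero)

lemma valuation_le_iff: "hle (RGamma nonzero_group) (valuation x) (valuation y) \<longleftrightarrow> f x \<preceq> f y"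
  unfolding valuation_def RGamma_def nonzero_group_def using le_zero_iff by auto

lemma valuation_closed: "valuation a \<in> hcarrier (RGamma nonzero_group)"
  unfolding valuation_def RGamma_def nonzero_group_def by auto

lemma mult_equiv_valuation: "mult_equiv R f (RGamma nonzero_group) valuation"
  unfolding mult_equiv_def by (simp add: valuation_mult[symmetric] valuation_le_iff flip: map_mult)

lemma krull_valuation_valuation:
  assumes two: "f 2 \<preceq> er"
  shows "krull_valuation nonzero_group valuation"
proof -
  interpret \<Gamma>: ordered_group nonzero_group
    by (rule ordered_group_nonzero_group)
  interpret R\<^sub>\<Gamma>: ordered_aura "RGamma nonzero_group"
    by (rule \<Gamma>.RGamma_ordered_aura)
  have triangle: "hle (RGamma nonzero_group) (valuation (a + b))
      (hadd (RGamma nonzero_group) (valuation a) (valuation b))" for a b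
    using nonarchimedean[OF two, of a b] valuation_closed
    by (metis valuation_le_iff R\<^sub>\<Gamma>.add_closed R\<^sub>\<Gamma>.le_trans \<Gamma>.RGamma_le_hadd1 \<Gamma>.RGamma_le_hadd2)
  show ?thesis
    unfolding krull_valuation_def mult_seminorm_def gen_seminorm_def is_aura_def
  proof (intro conjI allI)
    show "valuation (a * b) = hmul (RGamma nonzero_group) (valuation a) (valuation b)" for a b
      by (rule valuation_mult)
    then show "hle (RGamma nonzero_group) (valuation (a * b))
        (hmul (RGamma nonzero_group) (valuation a) (valuation b))" for a b
      using valuation_closed by simp
    show "valuation 0 = hzero (RGamma nonzero_group)" "valuation 1 = hone (RGamma nonzero_group)"
      by (simp_all add: valuation_def RGamma_def nonzero_group_def)
  qed (use \<Gamma>.ordered_abgroup \<Gamma>.RGamma_is_halo \<Gamma>.RGamma_is_semifield \<Gamma>.RGamma_positive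
      \<Gamma>.RGamma_total valuation_closed triangle in auto)
qed

end

theorem lemma3p6:
  shows
  "(\<forall>(G::'g ogroup) (v::'a::comm_ring_1 \<Rightarrow> 'g option).
      krull_valuation G v \<longrightarrow> tempered_mult_seminorm (RGamma G) v)
   \<and> (\<forall>(G1::'g ogroup) (v1::'a \<Rightarrow> 'g option) (G2::'h ogroup) (v2::'a \<Rightarrow> 'h option).
      krull_valuation G1 v1 \<and> krull_valuation G2 v2 \<longrightarrow>
      (seminorm_equiv (RGamma G1) v1 (RGamma G2) v2 \<longleftrightarrow> mult_equiv (RGamma G1) v1 (RGamma G2) v2))
   \<and> (\<forall>(R::'r halo) (f::'a \<Rightarrow> 'r). tempered_mult_seminorm R f \<longrightarrow>
        ((\<forall>(G::'g ogroup) (v::'a \<Rightarrow> 'g option).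
            krull_valuation G v \<and> mult_equiv R f (RGamma G) v \<longrightarrow> hle R (f 2) (hone R))
         \<and> (hle R (f 2) (hone R) \<longrightarrow>
            (\<exists>(G::'r ogroup) (v::'a \<Rightarrow> 'r option). krull_valuation G v \<and> mult_equiv R f (RGamma G) v))
         \<and> (hle R (f 2) (hone R) \<longleftrightarrow> (\<forall>n::nat. hle R (f (of_nat n)) (hone R)))))"
proof (intro conjI allI impI)
  show "tempered_mult_seminorm (RGamma G) v" if "krull_valuation G v"
    for G :: "'g ogroup" and v :: "'a \<Rightarrow> _"
    using that by (rule krull_valuation_tempered)
  show "seminorm_equiv (RGamma G1) v1 (RGamma G2) v2 \<longleftrightarrow> mult_equiv (RGamma G1) v1 (RGamma G2) v2"
    if "krull_valuation G1 v1 \<and> krull_valuation G2 v2"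
    for G1 :: "'g ogroup" and v1 :: "'a \<Rightarrow> _" and G2 :: "'h ogroup" and v2 :: "'a \<Rightarrow> _"
    using that by (intro seminorm_equiv_iff_mult_equiv) (auto simp: krull_valuation_def mult_seminorm_def)
  fix R :: "'r halo" and f :: "'a \<Rightarrow> 'r"
  assume "tempered_mult_seminorm R f"
  then interpret tempered_seminorm R f
    by (rule tempered_seminormI)
  show "hle R (f 2) (hone R)" if "krull_valuation G v \<and> mult_equiv R f (RGamma G) v"
    for G :: "'g ogroup" and v
    using that krull_valuation_two_le_one mult_equiv_le_one_iff \<open>tempered_mult_seminorm R f\<close>
    by (metis krull_valuation_def mult_seminorm_def tempered_mult_seminorm_def)
  show "\<exists>(G::'r ogroup) v. krull_valuation G v \<and> mult_equiv R f (RGamma G) v"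
    if "hle R (f 2) (hone R)"
    using krull_valuation_valuation[OF that] mult_equiv_valuation by blast
  show "hle R (f 2) (hone R) \<longleftrightarrow> (\<forall>n. hle R (f (of_nat n)) (hone R))"
    using map_of_nat_le_one by (metis of_nat_numeral)
qed

end
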